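(* Let $\{X(s)\}_{s\ge 0}$ be a centered Gaussian process with continuous sample paths and covariance kernel $R$ such that (i) there is $\rho>0$ with $R(cs,ct)=c^{2\rho}R(s,t)$ for all $c>0$, $s,t>0$, and (ii) there is $\eta>0$ with $h(x):=x^{-\rho}R(1,x)=O((\log x)^{-\eta})$ as $x\to\infty$. For $\alpha>1$ let $t_n=\alpha^n$, $a_k=(2(\log(k+1)+\log\log\alpha))^{1/2}$, and let $\delta_j$ denote the correlation coefficient between $X(t_{k+1})-X(t_k)$ and $X(t_{k+j+1})-X(t_{k+j})$ (which depends only on $j$). For $|\delta|<1$ and $a,b\in\mathbb{R}$ let $\phi(\delta,a,b)=\mathbb{P}(Z_\delta\in[a,\infty)\times[b,\infty))-\mathbb{P}(Z_0\in[a,\infty)\times[b,\infty))$, where $Z_\delta\sim N\Big(0,\begin{pmatrix}1&\delta\\ \delta&1\end{pmatrix}\Big)$. Then for every $0<\epsilon<\frac12(\eta\wedge 1)$ and every sufficiently large $\alpha$, there exist constants $C_{\eta,\alpha}>0$ and $M_{\eta,\epsilon,\alpha}>0$ such that \[ |\phi(\delta_j,a_k,a_{k+j})|\le C_{\eta,\alpha}\,\frac{1}{k^{1+\epsilon}}\,\frac{1}{j^{1+\eta-2\epsilon}} \] for all $k\ge 1$ and all $j\ge M_{\eta,\epsilon,\alpha}$. *)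

theory Defs
  imports "HOL-Probability.Probability" "HOL-Library.Landau_Symbols"
begin

definition gaussian_rv :: "'a measure \<Rightarrow> ('a \<Rightarrow> real) \<Rightarrow> bool" where
  "gaussian_rv M Y \<longleftrightarrow> Y \<in> borel_measurable M \<and>
     ((\<exists>\<mu>. AE \<omega> in M. Y \<omega> = \<mu>) \<or>
      (\<exists>\<mu> \<sigma>. \<sigma> > 0 \<and> distributed M lborel Y (normal_density \<mu> \<sigma>)))"

definition gaussian_process :: "'a measure \<Rightarrow> (real \<Rightarrow> 'a \<Rightarrow> real) \<Rightarrow> bool" where
  "gaussian_process M X \<longleftrightarrow>
     (\<forall>F c. finite F \<longrightarrow> F \<subseteq> {0..} \<longrightarrow> gaussian_rv M (\<lambda>\<omega>. \<Sum>s\<in>F. c s * X s \<omega>))"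

definition covar :: "'a measure \<Rightarrow> ('a \<Rightarrow> real) \<Rightarrow> ('a \<Rightarrow> real) \<Rightarrow> real" where
  "covar M Y Z = (\<integral>\<omega>. (Y \<omega> - (\<integral>x. Y x \<partial>M)) * (Z \<omega> - (\<integral>x. Z x \<partial>M)) \<partial>M)"

definition correl :: "'a measure \<Rightarrow> ('a \<Rightarrow> real) \<Rightarrow> ('a \<Rightarrow> real) \<Rightarrow> real" where
  "correl M Y Z = covar M Y Z / sqrt (covar M Y Y * covar M Z Z)"

definition incr :: "(real \<Rightarrow> 'a \<Rightarrow> real) \<Rightarrow> real \<Rightarrow> nat \<Rightarrow> 'a \<Rightarrow> real" where
  "incr X \<alpha> k \<omega> = X (\<alpha> ^ (k+1)) \<omega> - X (\<alpha> ^ k) \<omega>"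

definition delta_corr :: "'a measure \<Rightarrow> (real \<Rightarrow> 'a \<Rightarrow> real) \<Rightarrow> real \<Rightarrow> nat \<Rightarrow> nat \<Rightarrow> real" where
  "delta_corr M X \<alpha> k j = correl M (incr X \<alpha> k) (incr X \<alpha> (k+j))"

definition a_seq :: "real \<Rightarrow> nat \<Rightarrow> real" where
  "a_seq \<alpha> k = sqrt (2 * (ln (real k + 1) + ln (ln \<alpha>)))"

definition bvn_density :: "real \<Rightarrow> real \<times> real \<Rightarrow> real" where
  "bvn_density \<delta> z = exp (- ((fst z)\<^sup>2 - 2 * \<delta> * fst z * snd z + (snd z)\<^sup>2) / (2 * (1 - \<delta>\<^sup>2)))
                      / (2 * pi * sqrt (1 - \<delta>\<^sup>2))"

definition bvn_prob :: "real \<Rightarrow> real \<Rightarrow> real \<Rightarrow> real" where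
  "bvn_prob \<delta> a b = (LINT z:{a..} \<times> {b..}|lborel. bvn_density \<delta> z)"

definition phi_fun :: "real \<Rightarrow> real \<Rightarrow> real \<Rightarrow> real" where
  "phi_fun \<delta> a b = bvn_prob \<delta> a b - bvn_prob 0 a b"

end

theory Submission
  imports Defs "HOL-Real_Asymp.Real_Asymp"
begin

(* For |\<delta>| \<le> 1/2 the bivariate normal density with correlation \<delta> differs from the product
   density, on [1, \<infinity>)\<^sup>2, by at most |\<delta>| times the separable weight
   x\<^sup>3 e^(-(1-|\<delta>|) x\<^sup>2/2) y\<^sup>3 e^(-(1-|\<delta>|) y\<^sup>2/2), whose integral over [a, \<infinity>) \<times> [b, \<infinity>) is explicit.
   At a = a_k the one-dimensional factor is ((k+1) ln \<alpha>)^(-(1-|\<delta>|)) up to a logarithmic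
   factor, so |\<phi>(\<delta>, a_k, a_(k+j))| is at most |\<delta>| k^(-(1+\<epsilon>)) j^(-(1-2\<epsilon>)) once |\<delta>| \<le> \<epsilon>/4.
   By self-similarity the correlation \<delta>_j of the increments does not depend on k: it is a
   second difference of h(\<alpha>^m) = \<alpha>^(-m\<rho>) R(1, \<alpha>^m) over m = j-1, j, j+1, divided by the
   variance of one increment, hence O(j^(-\<eta>)) by the assumption on h. Multiplying the two
   bounds gives the claim. *)

section \<open>Gaussian tail integrals\<close>

(* The cubic factor makes the tail integral elementary; any power \<ge> 2 would serve the
   pointwise bounds. *)
definition cubic_gauss :: "real \<Rightarrow> real \<Rightarrow> real" where
  "cubic_gauss c x = x ^ 3 * exp (- c * x\<^sup>2 / 2)"

definition cubic_gauss_tail :: "real \<Rightarrow> real \<Rightarrow> real" where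
  "cubic_gauss_tail c a = (a\<^sup>2 / c + 2 / c\<^sup>2) * exp (- c * a\<^sup>2 / 2)"

lemma cubic_gauss_measurable [measurable]: "cubic_gauss c \<in> borel_measurable borel"
  unfolding cubic_gauss_def by measurable

lemma cubic_gauss_nonneg: "0 \<le> x \<Longrightarrow> 0 \<le> cubic_gauss c x"
  unfolding cubic_gauss_def by simp

lemma cubic_gauss_tail_nonneg: "0 < c \<Longrightarrow> 0 \<le> cubic_gauss_tail c a"
  unfolding cubic_gauss_tail_def by simp

lemma nn_integral_cubic_gauss_atLeast:
  assumes c: "0 < c" and a: "0 \<le> a"
  shows "(\<integral>\<^sup>+x. ennreal (cubic_gauss c x) * indicator {a..} x \<partial>lborel) = ennreal (cubic_gauss_tail c a)"
proof -
  let ?F = "\<lambda>x. - cubic_gauss_tail c x"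
  have "(\<integral>\<^sup>+x. ennreal (cubic_gauss c x) * indicator {a..} x \<partial>lborel) = ennreal (0 - ?F a)"
  proof (rule nn_integral_FTC_atLeast)
    show "(?F \<longlongrightarrow> 0) at_top"
      using c unfolding cubic_gauss_tail_def by real_asymp
    show "(?F has_real_derivative cubic_gauss c x) (at x)" for x
      using c unfolding cubic_gauss_tail_def cubic_gauss_def
      by (auto intro!: derivative_eq_intros simp: field_simps power2_eq_square power3_eq_cube)
    show "a \<le> x \<Longrightarrow> 0 \<le> cubic_gauss c x" for x
      using a by (simp add: cubic_gauss_nonneg)
  qed simp
  then show ?thesis by simp
qed

lemma nn_integral_cubic_gauss_Times:
  assumes c: "0 < c" and a: "0 \<le> a" and b: "0 \<le> b"
  shows "(\<integral>\<^sup>+z. ennreal (cubic_gauss c (fst z) * cubic_gauss c (snd z)) * indicator ({a..} \<times> {b..}) z \<partial>lborel)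
       = ennreal (cubic_gauss_tail c a * cubic_gauss_tail c b)"
proof -
  let ?f = "\<lambda>x. ennreal (cubic_gauss c x) * indicator {a..} x"
  let ?g = "\<lambda>y. ennreal (cubic_gauss c y) * indicator {b..} y"
  have "ennreal (cubic_gauss c (fst z) * cubic_gauss c (snd z)) * indicator ({a..} \<times> {b..}) z
      = ?f (fst z) * ?g (snd z)" for z
    using a b by (cases z) (auto simp: indicator_def cubic_gauss_nonneg ennreal_mult)
  then have "(\<integral>\<^sup>+z. ennreal (cubic_gauss c (fst z) * cubic_gauss c (snd z)) * indicator ({a..} \<times> {b..}) z \<partial>lborel)
      = (\<integral>\<^sup>+z. ?f (fst z) * ?g (snd z) \<partial>(lborel \<Otimes>\<^sub>M lborel))"
    by (simp only: lborel_prod)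
  also have "\<dots> = (\<integral>\<^sup>+x. \<integral>\<^sup>+y. ?f x * ?g y \<partial>lborel \<partial>lborel)"
    by (subst lborel.nn_integral_fst[symmetric]) auto
  also have "\<dots> = (\<integral>\<^sup>+x. ?f x \<partial>lborel) * (\<integral>\<^sup>+y. ?g y \<partial>lborel)"
    by (simp add: nn_integral_cmult nn_integral_multc)
  also have "\<dots> = ennreal (cubic_gauss_tail c a * cubic_gauss_tail c b)"
    using c a b by (simp add: nn_integral_cubic_gauss_atLeast cubic_gauss_tail_nonneg ennreal_mult)
  finally show ?thesis .
qed

lemma set_integral_cubic_gauss_Times:
  assumes c: "0 < c" and a: "0 \<le> a" and b: "0 \<le> b"
  defines "W \<equiv> \<lambda>z::real \<times> real. cubic_gauss c (fst z) * cubic_gauss c (snd z)"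
  shows "set_integrable lborel ({a..} \<times> {b..}) W"
    and "(LINT z:{a..} \<times> {b..}|lborel. W z) = cubic_gauss_tail c a * cubic_gauss_tail c b"
proof -
  let ?h = "\<lambda>z. indicator ({a..} \<times> {b..}) z *\<^sub>R W z"
  have "?h \<in> borel_measurable (borel \<Otimes>\<^sub>M borel)"
    unfolding W_def by measurable
  then have meas: "?h \<in> borel_measurable lborel"
    by (simp add: borel_prod)
  have nonneg: "0 \<le> ?h z" for z
    using a b by (cases z) (auto simp: W_def indicator_def cubic_gauss_nonneg)
  have nn: "(\<integral>\<^sup>+z. ennreal (?h z) \<partial>lborel) = ennreal (cubic_gauss_tail c a * cubic_gauss_tail c b)"
    using nn_integral_cubic_gauss_Times[OF c a b]
    by (simp add: W_def indicator_mult_ennreal mult.commute)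
  show "set_integrable lborel ({a..} \<times> {b..}) W"
    unfolding set_integrable_def using meas nonneg nn by (intro integrableI_nn_integral_finite) auto
  show "(LINT z:{a..} \<times> {b..}|lborel. W z) = cubic_gauss_tail c a * cubic_gauss_tail c b"
    unfolding set_lebesgue_integral_def using meas nonneg nn c
    by (simp add: integral_eq_nn_integral cubic_gauss_tail_nonneg)
qed

lemma abs_set_integral_diff_le:
  fixes f g W :: "'a \<Rightarrow> real"
  assumes W: "set_integrable M S W"
    and meas: "set_borel_measurable M S f" "set_borel_measurable M S g"
    and f: "\<And>z. z \<in> S \<Longrightarrow> \<bar>f z\<bar> \<le> W z" and g: "\<And>z. z \<in> S \<Longrightarrow> \<bar>g z\<bar> \<le> W z"
    and fg: "\<And>z. z \<in> S \<Longrightarrow> \<bar>f z - g z\<bar> \<le> K * W z"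
  shows "\<bar>(LINT z:S|M. f z) - (LINT z:S|M. g z)\<bar> \<le> K * (LINT z:S|M. W z)"
proof -
  have "AE z in M. z \<in> S \<longrightarrow> norm (f z) \<le> norm (W z)"
    and "AE z in M. z \<in> S \<longrightarrow> norm (g z) \<le> norm (W z)"
    using f g by (auto intro: order_trans[OF _ abs_ge_self])
  then have "set_integrable M S f" "set_integrable M S g"
    using meas by (auto intro: set_integrable_bound[OF W])
  then have "(LINT z:S|M. f z) - (LINT z:S|M. g z) = (LINT z:S|M. f z - g z)"
    and fg_int: "set_integrable M S (\<lambda>z. f z - g z)"
    by auto
  moreover have "\<bar>LINT z:S|M. f z - g z\<bar> \<le> (LINT z:S|M. \<bar>f z - g z\<bar>)"
    using set_integral_norm_bound[OF fg_int] by simp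
  moreover have "(LINT z:S|M. \<bar>f z - g z\<bar>) \<le> (LINT z:S|M. K * W z)"
    using fg_int W fg by (intro set_integral_mono) (auto simp: set_integrable_abs)
  ultimately show ?thesis
    by simp
qed

section \<open>Perturbation of the bivariate normal density\<close>

lemma bvn_density_measurable [measurable]: "bvn_density \<delta> \<in> borel_measurable lborel"
proof -
  have "bvn_density \<delta> \<in> borel_measurable (borel \<Otimes>\<^sub>M borel)"
    unfolding bvn_density_def by measurable
  then show ?thesis by (simp add: borel_prod)
qed

lemma bvn_density_nonneg: "\<bar>\<delta>\<bar> \<le> 1 \<Longrightarrow> 0 \<le> bvn_density \<delta> z"
  unfolding bvn_density_def by (auto intro!: divide_nonneg_nonneg simp: abs_square_le_1)

lemma bvn_density_Pair:
  "bvn_density \<delta> (x, y) = exp (- ((x\<^sup>2 - 2 * \<delta> * x * y + y\<^sup>2) / (2 * (1 - \<delta>\<^sup>2)))) / (2 * pi * sqrt (1 - \<delta>\<^sup>2))"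
  unfolding bvn_density_def by (simp add: minus_divide_left)

lemma bvn_exponent_ge:
  fixes \<delta> x y :: real
  assumes "\<bar>\<delta>\<bar> < 1" "0 \<le> x" "0 \<le> y"
  shows "(1 - \<bar>\<delta>\<bar>) * ((x\<^sup>2 + y\<^sup>2) / 2) \<le> (x\<^sup>2 - 2 * \<delta> * x * y + y\<^sup>2) / (2 * (1 - \<delta>\<^sup>2))"
proof -
  have "\<bar>2 * \<delta> * x * y\<bar> = \<bar>\<delta>\<bar> * (2 * x * y)"
    using assms by (simp add: abs_mult)
  also have "\<dots> \<le> \<bar>\<delta>\<bar> * (x\<^sup>2 + y\<^sup>2)"
    using sum_squares_bound[of x y] by (intro mult_left_mono) (auto simp: power2_eq_square)
  finally have Q: "(1 - \<bar>\<delta>\<bar>) * (x\<^sup>2 + y\<^sup>2) \<le> x\<^sup>2 - 2 * \<delta> * x * y + y\<^sup>2"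
    by (simp add: algebra_simps)
  have r: "0 < 1 - \<delta>\<^sup>2" "1 - \<delta>\<^sup>2 \<le> 1"
    using assms by (auto simp: abs_square_less_1)
  have "(1 - \<bar>\<delta>\<bar>) * ((x\<^sup>2 + y\<^sup>2) / 2) \<le> (x\<^sup>2 - 2 * \<delta> * x * y + y\<^sup>2) / 2"
    using Q by simp
  also have "\<dots> \<le> (x\<^sup>2 - 2 * \<delta> * x * y + y\<^sup>2) / (2 * (1 - \<delta>\<^sup>2))"
  proof (rule divide_left_mono)
    have "0 \<le> (1 - \<bar>\<delta>\<bar>) * (x\<^sup>2 + y\<^sup>2)"
      using assms by simp
    then show "0 \<le> x\<^sup>2 - 2 * \<delta> * x * y + y\<^sup>2"
      using Q by linarith
  qed (use r in auto)
  finally show ?thesis .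
qed

lemma inverse_sqrt_one_minus_square_le:
  fixes \<delta> :: real
  assumes "\<bar>\<delta>\<bar> \<le> 1/2"
  shows "1 / sqrt (1 - \<delta>\<^sup>2) \<le> 1 + \<bar>\<delta>\<bar>"
proof -
  define d where "d = \<bar>\<delta>\<bar>"
  have d: "0 \<le> d" "d \<le> 1/2" and \<delta>d: "\<delta>\<^sup>2 = d\<^sup>2"
    using assms by (auto simp: d_def)
  have "d * d \<le> 1/2 * (1/2)"
    using d by (intro mult_mono) auto
  then have d2: "d\<^sup>2 \<le> 1/4"
    by (simp add: power2_eq_square)
  then have r: "0 < 1 - d\<^sup>2" "1 - d\<^sup>2 \<le> 1"
    by auto
  have "1 - d\<^sup>2 = sqrt (1 - d\<^sup>2) * sqrt (1 - d\<^sup>2)"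
    using r by simp
  also have "\<dots> \<le> sqrt (1 - d\<^sup>2)"
    using r by (intro mult_right_le_one_le) auto
  finally have "(1 - d\<^sup>2) * (1 + d) \<le> sqrt (1 - d\<^sup>2) * (1 + d)"
    using d by (intro mult_right_mono) auto
  moreover have "0 \<le> d * (1 - d - d\<^sup>2)"
    using d d2 by simp
  ultimately have "1 \<le> sqrt (1 - d\<^sup>2) * (1 + d)"
    by (simp add: algebra_simps power2_eq_square)
  then show ?thesis
    unfolding \<delta>d d_def[symmetric] using r by (simp add: divide_le_eq mult.commute)
qed

lemma bvn_exponent_deviation:
  fixes \<delta> x y :: real
  assumes d: "\<bar>\<delta>\<bar> \<le> 1/2" and x: "1 \<le> x" and y: "1 \<le> y"
  shows "\<bar>(x\<^sup>2 - 2 * \<delta> * x * y + y\<^sup>2) / (2 * (1 - \<delta>\<^sup>2)) - (x\<^sup>2 + y\<^sup>2) / 2\<bar> \<le> 8/3 * \<bar>\<delta>\<bar> * (x\<^sup>2 * y\<^sup>2)"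
proof -
  define r where "r = 1 - \<delta>\<^sup>2"
  have r: "3/4 \<le> r"
    using d abs_square_le_1[of "2 * \<delta>"] by (simp add: r_def power_mult_distrib abs_mult)
  have "\<bar>\<delta>\<^sup>2 * (x\<^sup>2 + y\<^sup>2) - 2 * \<delta> * x * y\<bar> \<le> \<bar>\<delta>\<bar> * (x\<^sup>2 + y\<^sup>2) + \<bar>\<delta>\<bar> * (2 * x * y)"
  proof -
    have "\<bar>\<delta>\<bar> * \<bar>\<delta>\<bar> \<le> \<bar>\<delta>\<bar>"
      using d by (intro mult_left_le_one_le) auto
    then have "\<delta>\<^sup>2 \<le> \<bar>\<delta>\<bar>"
      by (simp add: power2_eq_square)
    then have "\<bar>\<delta>\<^sup>2 * (x\<^sup>2 + y\<^sup>2)\<bar> \<le> \<bar>\<delta>\<bar> * (x\<^sup>2 + y\<^sup>2)"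
      by (simp add: abs_mult mult_right_mono)
    moreover have "\<bar>2 * \<delta> * x * y\<bar> = \<bar>\<delta>\<bar> * (2 * x * y)"
      using x y by (simp add: abs_mult)
    ultimately show ?thesis
      by linarith
  qed
  also have "\<dots> = \<bar>\<delta>\<bar> * (x + y)\<^sup>2"
    by (simp add: power2_eq_square algebra_simps)
  also have "\<dots> \<le> \<bar>\<delta>\<bar> * (4 * (x\<^sup>2 * y\<^sup>2))"
  proof -
    have "0 \<le> (x - 1) * (y - 1)" "1 \<le> x * y"
      using x y mult_mono[of 1 x 1 y] by auto
    then have "x + y \<le> 2 * (x * y)"
      by (simp add: algebra_simps)
    then have "(x + y)\<^sup>2 \<le> (2 * (x * y))\<^sup>2"
      using x y by (intro power_mono) auto
    then show ?thesis
      by (intro mult_left_mono) (auto simp: power_mult_distrib)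
  qed
  finally have num: "\<bar>(x\<^sup>2 - 2 * \<delta> * x * y + y\<^sup>2) - r * (x\<^sup>2 + y\<^sup>2)\<bar> \<le> 4 * \<bar>\<delta>\<bar> * (x\<^sup>2 * y\<^sup>2)"
    by (simp add: r_def algebra_simps)
  have "(x\<^sup>2 - 2 * \<delta> * x * y + y\<^sup>2) / (2 * r) - (x\<^sup>2 + y\<^sup>2) / 2
      = ((x\<^sup>2 - 2 * \<delta> * x * y + y\<^sup>2) - r * (x\<^sup>2 + y\<^sup>2)) / (2 * r)"
    using r by (simp add: field_simps)
  also have "\<bar>\<dots>\<bar> \<le> (4 * \<bar>\<delta>\<bar> * (x\<^sup>2 * y\<^sup>2)) / (2 * (3/4))"
    using num r by (simp only: abs_divide) (intro frac_le, auto)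
  finally show ?thesis
    by (simp add: r_def)
qed

lemma abs_exp_minus_diff_le:
  fixes p q :: real
  shows "\<bar>exp (- p) - exp (- q)\<bar> \<le> \<bar>p - q\<bar> * exp (- min p q)"
proof -
  have *: "exp (- p) - exp (- q) \<le> (q - p) * exp (- p)" if "p \<le> q" for p q :: real
  proof -
    have "1 - exp (- (q - p)) \<le> q - p"
      using exp_ge_add_one_self[of "- (q - p)"] by linarith
    then have "exp (- p) * (1 - exp (- (q - p))) \<le> exp (- p) * (q - p)"
      by (intro mult_left_mono) auto
    moreover have "exp (- p) * exp (- (q - p)) = exp (- q)"
      by (simp flip: exp_add)
    ultimately show ?thesis
      by (simp add: algebra_simps)
  qed
  show ?thesis
    using *[of p q] *[of q p] by (cases "p \<le> q") (auto simp: min_def abs_if)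
qed

lemma bvn_density_le_cubic_gauss:
  fixes \<delta> c x y :: real
  assumes \<delta>: "\<bar>\<delta>\<bar> \<le> 1/2" and c: "0 \<le> c" "c \<le> 1 - \<bar>\<delta>\<bar>" and x: "1 \<le> x" and y: "1 \<le> y"
  shows "bvn_density \<delta> (x, y) \<le> cubic_gauss c x * cubic_gauss c y"
proof -
  define u where "u = (x\<^sup>2 - 2 * \<delta> * x * y + y\<^sup>2) / (2 * (1 - \<delta>\<^sup>2))"
  define s where "s = sqrt (1 - \<delta>\<^sup>2)"
  define E where "E = exp (- c * x\<^sup>2 / 2) * exp (- c * y\<^sup>2 / 2)"
  have "c * ((x\<^sup>2 + y\<^sup>2) / 2) \<le> (1 - \<bar>\<delta>\<bar>) * ((x\<^sup>2 + y\<^sup>2) / 2)"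
    using c by (intro mult_right_mono) auto
  also have "\<dots> \<le> u"
    unfolding u_def using \<delta> x y by (intro bvn_exponent_ge) auto
  finally have "exp (- u) \<le> E"
    by (simp add: E_def field_simps flip: exp_add)
  moreover have "1 \<le> 2 * pi * s"
  proof -
    have "1 / s \<le> 3/2"
      using inverse_sqrt_one_minus_square_le[OF \<delta>] \<delta> by (simp add: s_def)
    moreover have "0 < s"
      using \<delta> by (simp add: s_def abs_square_less_1)
    ultimately have "2/3 \<le> s"
      by (simp add: field_simps)
    then have "2 * 3 * (2/3) \<le> 2 * pi * s"
      using pi_gt3 by (intro mult_mono) auto
    then show ?thesis
      by simp
  qed
  moreover have "1 \<le> x ^ 3 * y ^ 3"
    using x y mult_mono[of 1 "x ^ 3" 1 "y ^ 3"] by simp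
  ultimately have "exp (- u) / (2 * pi * s) \<le> exp (- u) / 1" "E \<le> x ^ 3 * y ^ 3 * E"
    using divide_left_mono[of 1 "2 * pi * s" "exp (- u)"] mult_right_mono[of 1 "x ^ 3 * y ^ 3" E]
    by (auto simp: E_def)
  then have "exp (- u) / (2 * pi * s) \<le> x ^ 3 * y ^ 3 * E"
    using \<open>exp (- u) \<le> E\<close> by linarith
  then show ?thesis
    by (simp add: bvn_density_Pair cubic_gauss_def E_def u_def s_def mult_ac)
qed

lemma bvn_exponential_diff_le:
  fixes \<delta> x y :: real
  assumes \<delta>: "\<bar>\<delta>\<bar> \<le> 1/2" and x: "1 \<le> x" and y: "1 \<le> y"
  shows "\<bar>exp (- ((x\<^sup>2 - 2 * \<delta> * x * y + y\<^sup>2) / (2 * (1 - \<delta>\<^sup>2)))) - exp (- ((x\<^sup>2 + y\<^sup>2) / 2))\<bar>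
           \<le> 8/3 * \<bar>\<delta>\<bar> * (x\<^sup>2 * y\<^sup>2) * exp (- ((1 - \<bar>\<delta>\<bar>) * ((x\<^sup>2 + y\<^sup>2) / 2)))"
proof -
  define u where "u = (x\<^sup>2 - 2 * \<delta> * x * y + y\<^sup>2) / (2 * (1 - \<delta>\<^sup>2))"
  define v where "v = (x\<^sup>2 + y\<^sup>2) / 2"
  have "(1 - \<bar>\<delta>\<bar>) * v \<le> u"
    unfolding u_def v_def using \<delta> x y by (intro bvn_exponent_ge) auto
  moreover have "(1 - \<bar>\<delta>\<bar>) * v \<le> v"
    using \<delta> by (simp add: v_def mult_left_le_one_le)
  ultimately have "exp (- min u v) \<le> exp (- ((1 - \<bar>\<delta>\<bar>) * v))"
    by (simp add: min_def)
  then have "\<bar>u - v\<bar> * exp (- min u v) \<le> (8/3 * \<bar>\<delta>\<bar> * (x\<^sup>2 * y\<^sup>2)) * exp (- ((1 - \<bar>\<delta>\<bar>) * v))"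
    using bvn_exponent_deviation[OF \<delta> x y] by (intro mult_mono) (auto simp: u_def v_def)
  then show ?thesis
    using abs_exp_minus_diff_le[of u v] by (simp add: u_def v_def)
qed

lemma abs_divide_diff_le:
  fixes a b s d K :: real
  assumes s: "0 < s" "1 \<le> 1 / s" "1 / s \<le> 1 + d" and b: "0 \<le> b" and ab: "\<bar>a - b\<bar> \<le> K"
  shows "\<bar>a / s - b\<bar> \<le> K * (1 + d) + b * d"
proof -
  have "a / s - b = (a - b) * (1 / s) + b * (1 / s - 1)"
    using s by (simp add: field_simps)
  also have "\<bar>\<dots>\<bar> \<le> K * (1 + d) + b * d"
  proof (rule order_trans[OF abs_triangle_ineq add_mono])
    show "\<bar>(a - b) * (1 / s)\<bar> \<le> K * (1 + d)"
      using ab s unfolding abs_mult by (intro mult_mono) auto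
    show "\<bar>b * (1 / s - 1)\<bar> \<le> b * d"
      using b s by (simp add: abs_mult mult_left_mono)
  qed
  finally show ?thesis .
qed

lemma bvn_density_diff_le:
  fixes \<delta> x y :: real
  assumes \<delta>: "\<bar>\<delta>\<bar> \<le> 1/2" and x: "1 \<le> x" and y: "1 \<le> y"
  shows "\<bar>bvn_density \<delta> (x, y) - bvn_density 0 (x, y)\<bar>
           \<le> \<bar>\<delta>\<bar> * (cubic_gauss (1 - \<bar>\<delta>\<bar>) x * cubic_gauss (1 - \<bar>\<delta>\<bar>) y)"
proof -
  define d where "d = \<bar>\<delta>\<bar>"
  define u where "u = (x\<^sup>2 - 2 * \<delta> * x * y + y\<^sup>2) / (2 * (1 - \<delta>\<^sup>2))"
  define v where "v = (x\<^sup>2 + y\<^sup>2) / 2"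
  define s where "s = sqrt (1 - \<delta>\<^sup>2)"
  define E where "E = exp (- ((1 - d) * v))"
  define P where "P = d * (x ^ 3 * y ^ 3) * E"
  have d: "0 \<le> d" "d \<le> 1/2"
    using \<delta> by (auto simp: d_def)
  have s: "0 < s" "1 \<le> 1 / s" "1 / s \<le> 1 + d"
    using \<delta> inverse_sqrt_one_minus_square_le[OF \<delta>] by (auto simp: s_def d_def abs_square_less_1)
  have "1 \<le> x\<^sup>2" "1 \<le> y\<^sup>2" "x\<^sup>2 \<le> x ^ 3" "y\<^sup>2 \<le> y ^ 3"
    using x y by (auto intro: one_le_power power_increasing)
  then have xy: "1 \<le> x ^ 3 * y ^ 3" "x\<^sup>2 * y\<^sup>2 \<le> x ^ 3 * y ^ 3"
    using x mult_mono[of 1 "x ^ 3" 1 "y ^ 3"] mult_mono[of "x\<^sup>2" "x ^ 3" "y\<^sup>2" "y ^ 3"] by auto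
  have E: "exp (- v) \<le> E" "0 \<le> E"
    using d by (auto simp: E_def v_def mult_left_le_one_le)
  have "exp (- v) \<le> x ^ 3 * y ^ 3 * E"
    using E xy mult_right_mono[of 1 "x ^ 3 * y ^ 3" E] by simp
  then have P: "0 \<le> P" "exp (- v) * d \<le> P"
    using d xy E mult_right_mono[of "exp (- v)" "x ^ 3 * y ^ 3 * E" d] by (auto simp: P_def mult_ac)
  have "bvn_density \<delta> (x, y) - bvn_density 0 (x, y) = exp (- u) / (2 * pi * s) - exp (- v) / (2 * pi)"
    by (simp add: bvn_density_Pair u_def v_def s_def)
  also have "\<dots> = (exp (- u) / s - exp (- v)) / (2 * pi)"
    using s(1) by (simp add: field_simps)
  finally have bvn: "\<bar>bvn_density \<delta> (x, y) - bvn_density 0 (x, y)\<bar> = \<bar>exp (- u) / s - exp (- v)\<bar> / (2 * pi)"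
    by simp
  have "\<bar>exp (- u) - exp (- v)\<bar> \<le> 8/3 * d * (x\<^sup>2 * y\<^sup>2) * E"
    using bvn_exponential_diff_le[OF \<delta> x y] by (simp add: u_def v_def E_def d_def)
  also have "\<dots> \<le> 8/3 * P"
    using d xy E by (simp add: P_def mult_left_mono mult_right_mono mult_ac)
  finally have "\<bar>exp (- u) / s - exp (- v)\<bar> \<le> 8/3 * P * (1 + d) + exp (- v) * d"
    using s by (intro abs_divide_diff_le) auto
  also have "\<dots> \<le> 5 * P"
    using P d mult_left_mono[of "1 + d" "3/2" "8/3 * P"] by auto
  finally have "\<bar>exp (- u) / s - exp (- v)\<bar> / (2 * pi) \<le> 5 * P / (2 * pi)"
    by (intro divide_right_mono) auto
  also have "\<bar>exp (- u) / s - exp (- v)\<bar> / (2 * pi) = \<bar>bvn_density \<delta> (x, y) - bvn_density 0 (x, y)\<bar>"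
    by (rule bvn[symmetric])
  also have "5 * P / (2 * pi) \<le> P"
    using P(1) pi_gt3 mult_left_mono[of 5 "2 * pi" P] by (simp add: divide_le_eq mult.commute)
  also have "P = d * (cubic_gauss (1 - d) x * cubic_gauss (1 - d) y)"
    unfolding P_def cubic_gauss_def E_def v_def by (simp add: field_simps flip: exp_add)
  finally show ?thesis
    unfolding d_def .
qed

lemma abs_phi_fun_le:
  fixes \<delta> a b :: real
  assumes \<delta>: "\<bar>\<delta>\<bar> \<le> 1/2" and a: "1 \<le> a" and b: "1 \<le> b"
  shows "\<bar>phi_fun \<delta> a b\<bar> \<le> \<bar>\<delta>\<bar> * (cubic_gauss_tail (1 - \<bar>\<delta>\<bar>) a * cubic_gauss_tail (1 - \<bar>\<delta>\<bar>) b)"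
proof -
  define c where "c = 1 - \<bar>\<delta>\<bar>"
  define S where "S = {a..} \<times> {b..}"
  define W where "W = (\<lambda>z::real \<times> real. cubic_gauss c (fst z) * cubic_gauss c (snd z))"
  have c: "0 < c" "c \<le> 1 - \<bar>\<delta>\<bar>" "c \<le> 1 - \<bar>0\<bar>"
    using \<delta> by (auto simp: c_def)
  have [measurable]: "S \<in> sets lborel"
    by (simp add: S_def borel_closed closed_Times)
  have S: "1 \<le> fst z" "1 \<le> snd z" "z = (fst z, snd z)" if "z \<in> S" for z
    using that a b by (auto simp: S_def)
  have "\<bar>phi_fun \<delta> a b\<bar> \<le> \<bar>\<delta>\<bar> * (LINT z:S|lborel. W z)"
    unfolding phi_fun_def bvn_prob_def S_def[symmetric]
  proof (rule abs_set_integral_diff_le)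
    show "set_integrable lborel S W"
      using set_integral_cubic_gauss_Times(1)[OF c(1)] a b by (simp add: S_def W_def)
    show "set_borel_measurable lborel S (bvn_density \<delta>)" "set_borel_measurable lborel S (bvn_density 0)"
      unfolding set_borel_measurable_def by measurable
    show "\<bar>bvn_density \<delta> z\<bar> \<le> W z" "\<bar>bvn_density 0 z\<bar> \<le> W z" if "z \<in> S" for z
      using bvn_density_le_cubic_gauss[OF _ _ c(2) S(1,2)[OF that]] S(3)[OF that]
        bvn_density_le_cubic_gauss[OF _ _ c(3) S(1,2)[OF that]] bvn_density_nonneg[of \<delta> z]
        bvn_density_nonneg[of 0 z] \<delta> c
      by (auto simp: W_def)
    show "\<bar>bvn_density \<delta> z - bvn_density 0 z\<bar> \<le> \<bar>\<delta>\<bar> * W z" if "z \<in> S" for z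
      using bvn_density_diff_le[OF \<delta> S(1,2)[OF that]] S(3)[OF that] by (simp add: W_def c_def)
  qed
  also have "(LINT z:S|lborel. W z) = cubic_gauss_tail c a * cubic_gauss_tail c b"
    using set_integral_cubic_gauss_Times(2)[OF c(1)] a b by (simp add: S_def W_def)
  finally show ?thesis
    by (simp add: c_def)
qed

section \<open>Correlation of the increments\<close>

lemma gaussian_process_gaussian_rv:
  assumes "gaussian_process M X" "0 \<le> s"
  shows "gaussian_rv M (X s)"
  using assms unfolding gaussian_process_def
  by (elim allE[of _ "{s}"] allE[of _ "\<lambda>_. 1"]) simp

lemma gaussian_rv_square_integrable:
  assumes "prob_space M" "gaussian_rv M Y"
  shows "integrable M (\<lambda>\<omega>. (Y \<omega>)\<^sup>2)"
proof -
  interpret prob_space M by (rule assms(1))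
  have [measurable]: "Y \<in> borel_measurable M"
    using assms(2) by (simp add: gaussian_rv_def)
  from assms(2) consider (const) \<mu> where "AE \<omega> in M. Y \<omega> = \<mu>"
    | (normal) \<mu> \<sigma> where "0 < \<sigma>" "distributed M lborel Y (normal_density \<mu> \<sigma>)"
    unfolding gaussian_rv_def by blast
  then show ?thesis
  proof cases
    case const
    then have ae: "AE \<omega> in M. \<mu>\<^sup>2 = (Y \<omega>)\<^sup>2"
      by eventually_elim simp
    have "integrable M (\<lambda>_. \<mu>\<^sup>2)"
      by simp
    then show ?thesis
      by (rule integrable_cong_AE_imp[OF _ _ ae]) measurable
  next
    case normal
    have "integrable M (\<lambda>\<omega>. (Y \<omega> - \<mu>) ^ k)" for k
    proof -
      have "integrable lborel (\<lambda>x. normal_density \<mu> \<sigma> x * (x - \<mu>) ^ k)"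
        using normal(1) by (rule integrable_normal_moment)
      moreover have "integrable lborel (\<lambda>x. normal_density \<mu> \<sigma> x * (x - \<mu>) ^ k)
          \<longleftrightarrow> integrable M (\<lambda>\<omega>. (Y \<omega> - \<mu>) ^ k)"
        by (rule distributed_integrable[OF normal(2)]) auto
      ultimately show ?thesis
        by blast
    qed
    from this[of 2] this[of 1]
    have "integrable M (\<lambda>\<omega>. (Y \<omega> - \<mu>)\<^sup>2 + 2 * \<mu> * (Y \<omega> - \<mu>) + \<mu>\<^sup>2)"
      by (intro Bochner_Integration.integrable_add integrable_mult_right) auto
    moreover have "(Y \<omega> - \<mu>)\<^sup>2 + 2 * \<mu> * (Y \<omega> - \<mu>) + \<mu>\<^sup>2 = (Y \<omega>)\<^sup>2" for \<omega>
      by (simp add: power2_eq_square algebra_simps)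
    ultimately show ?thesis
      by simp
  qed
qed

lemma integrable_mult_of_square_integrable:
  fixes Y Z :: "'a \<Rightarrow> real"
  assumes [measurable]: "Y \<in> borel_measurable M" "Z \<in> borel_measurable M"
    and "integrable M (\<lambda>\<omega>. (Y \<omega>)\<^sup>2)" "integrable M (\<lambda>\<omega>. (Z \<omega>)\<^sup>2)"
  shows "integrable M (\<lambda>\<omega>. Y \<omega> * Z \<omega>)"
proof (rule Bochner_Integration.integrable_bound)
  show "integrable M (\<lambda>\<omega>. (Y \<omega>)\<^sup>2 + (Z \<omega>)\<^sup>2)"
    using assms by auto
  have "\<bar>Y \<omega> * Z \<omega>\<bar> \<le> (Y \<omega>)\<^sup>2 + (Z \<omega>)\<^sup>2" for \<omega>
  proof -
    have "2 * (\<bar>Y \<omega>\<bar> * \<bar>Z \<omega>\<bar>) \<le> (Y \<omega>)\<^sup>2 + (Z \<omega>)\<^sup>2"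
      using sum_squares_bound[of "\<bar>Y \<omega>\<bar>" "\<bar>Z \<omega>\<bar>"] by (simp add: mult.assoc)
    moreover have "0 \<le> \<bar>Y \<omega>\<bar> * \<bar>Z \<omega>\<bar>"
      by simp
    ultimately show ?thesis
      unfolding abs_mult by linarith
  qed
  then show "AE \<omega> in M. norm (Y \<omega> * Z \<omega>) \<le> norm ((Y \<omega>)\<^sup>2 + (Z \<omega>)\<^sup>2)"
    by simp
qed measurable

lemma covar_diff_diff:
  fixes Y :: "'i \<Rightarrow> 'a \<Rightarrow> real"
  assumes int: "\<And>i. i \<in> I \<Longrightarrow> integrable M (Y i)" "\<And>i. i \<in> I \<Longrightarrow> integrable M (\<lambda>\<omega>. (Y i \<omega>)\<^sup>2)"
    and centered: "\<And>i. i \<in> I \<Longrightarrow> (\<integral>\<omega>. Y i \<omega> \<partial>M) = 0"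
    and I: "i \<in> I" "j \<in> I" "k \<in> I" "l \<in> I"
  shows "covar M (\<lambda>\<omega>. Y i \<omega> - Y j \<omega>) (\<lambda>\<omega>. Y k \<omega> - Y l \<omega>)
       = covar M (Y i) (Y k) - covar M (Y i) (Y l) - covar M (Y j) (Y k) + covar M (Y j) (Y l)"
proof -
  have prod: "integrable M (\<lambda>\<omega>. Y p \<omega> * Y q \<omega>)" if "p \<in> I" "q \<in> I" for p q
    using that int by (intro integrable_mult_of_square_integrable) auto
  have covar: "covar M (Y p) (Y q) = (\<integral>\<omega>. Y p \<omega> * Y q \<omega> \<partial>M)" if "p \<in> I" "q \<in> I" for p q
    using that by (simp add: covar_def centered)
  have "(\<integral>\<omega>. Y p \<omega> - Y q \<omega> \<partial>M) = 0" if "p \<in> I" "q \<in> I" for p q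
    using that by (simp add: int centered)
  then have "covar M (\<lambda>\<omega>. Y i \<omega> - Y j \<omega>) (\<lambda>\<omega>. Y k \<omega> - Y l \<omega>)
      = (\<integral>\<omega>. (Y i \<omega> * Y k \<omega> - Y i \<omega> * Y l \<omega>) - (Y j \<omega> * Y k \<omega> - Y j \<omega> * Y l \<omega>) \<partial>M)"
    using I by (simp add: covar_def algebra_simps)
  also have "\<dots> = covar M (Y i) (Y k) - covar M (Y i) (Y l) - covar M (Y j) (Y k) + covar M (Y j) (Y l)"
    using I by (simp add: prod covar)
  finally show ?thesis .
qed

lemma covar_increments:
  assumes "prob_space M" "gaussian_process M X"
    and "\<forall>s\<ge>0. integrable M (X s) \<and> (\<integral>\<omega>. X s \<omega> \<partial>M) = 0"
    and "0 \<le> s\<^sub>1" "0 \<le> s\<^sub>0" "0 \<le> t\<^sub>1" "0 \<le> t\<^sub>0"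
  shows "covar M (\<lambda>\<omega>. X s\<^sub>1 \<omega> - X s\<^sub>0 \<omega>) (\<lambda>\<omega>. X t\<^sub>1 \<omega> - X t\<^sub>0 \<omega>)
       = covar M (X s\<^sub>1) (X t\<^sub>1) - covar M (X s\<^sub>1) (X t\<^sub>0) - covar M (X s\<^sub>0) (X t\<^sub>1) + covar M (X s\<^sub>0) (X t\<^sub>0)"
  using assms
  by (intro covar_diff_diff[where I = "{0..}"])
     (auto intro: gaussian_rv_square_integrable gaussian_process_gaussian_rv)

lemma powr_power_eq_power_powr: "0 < x \<Longrightarrow> (x ^ n) powr r = (x powr r) ^ n"
  for x r :: real
  by (simp add: powr_realpow[symmetric] powr_powr mult.commute)

(* The covariance of the increments over [1, \<alpha>] and [\<alpha>^j, \<alpha>^(j+1)]; by self-similarity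
   the increments k and k + j have this covariance scaled by (\<alpha>^k)^(2\<rho>). *)
definition incr_covar :: "(real \<Rightarrow> real \<Rightarrow> real) \<Rightarrow> real \<Rightarrow> nat \<Rightarrow> real" where
  "incr_covar R \<alpha> j = R \<alpha> (\<alpha> ^ (j + 1)) - R \<alpha> (\<alpha> ^ j) - R 1 (\<alpha> ^ (j + 1)) + R 1 (\<alpha> ^ j)"

lemma covar_incr_eq:
  assumes "prob_space M" "gaussian_process M X"
    and "\<forall>s\<ge>0. integrable M (X s) \<and> (\<integral>\<omega>. X s \<omega> \<partial>M) = 0"
    and R: "\<forall>s\<ge>0. \<forall>t\<ge>0. R s t = covar M (X s) (X t)"
    and scaling: "\<forall>c>0. \<forall>s>0. \<forall>t>0. R (c * s) (c * t) = c powr (2 * \<rho>) * R s t"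
    and \<alpha>: "0 < \<alpha>"
  shows "covar M (incr X \<alpha> k) (incr X \<alpha> (k + j)) = ((\<alpha> powr \<rho>) ^ k)\<^sup>2 * incr_covar R \<alpha> j"
proof -
  have "\<alpha> powr (2 * \<rho>) = (\<alpha> powr \<rho>)\<^sup>2"
    by (simp add: power2_eq_square flip: powr_add)
  then have "(\<alpha> ^ k) powr (2 * \<rho>) = ((\<alpha> powr \<rho>) ^ k)\<^sup>2"
    using \<alpha> by (simp add: powr_power_eq_power_powr flip: power_mult) (simp add: mult.commute)
  then have sc: "R (\<alpha> ^ k * s) (\<alpha> ^ k * t) = ((\<alpha> powr \<rho>) ^ k)\<^sup>2 * R s t" if "0 < s" "0 < t" for s t
    using scaling that \<alpha> by simp
  have "covar M (incr X \<alpha> k) (incr X \<alpha> (k + j))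
      = R (\<alpha> ^ k * \<alpha>) (\<alpha> ^ k * \<alpha> ^ (j + 1)) - R (\<alpha> ^ k * \<alpha>) (\<alpha> ^ k * \<alpha> ^ j)
        - R (\<alpha> ^ k * 1) (\<alpha> ^ k * \<alpha> ^ (j + 1)) + R (\<alpha> ^ k * 1) (\<alpha> ^ k * \<alpha> ^ j)"
    unfolding incr_def using assms(1-3) \<alpha>
    by (subst covar_increments) (simp_all add: R power_add mult_ac)
  also have "\<dots> = ((\<alpha> powr \<rho>) ^ k)\<^sup>2 * R \<alpha> (\<alpha> ^ (j + 1)) - ((\<alpha> powr \<rho>) ^ k)\<^sup>2 * R \<alpha> (\<alpha> ^ j)
      - ((\<alpha> powr \<rho>) ^ k)\<^sup>2 * R 1 (\<alpha> ^ (j + 1)) + ((\<alpha> powr \<rho>) ^ k)\<^sup>2 * R 1 (\<alpha> ^ j)"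
    using \<alpha> by (simp only: sc zero_less_power zero_less_one)
  also have "\<dots> = ((\<alpha> powr \<rho>) ^ k)\<^sup>2 * incr_covar R \<alpha> j"
    by (simp add: incr_covar_def algebra_simps)
  finally show ?thesis .
qed

(* When incr_covar R \<alpha> 0 = 0 the increments are degenerate and both sides are 0,
   by the convention x / 0 = 0. *)
lemma delta_corr_eq:
  assumes "prob_space M" "gaussian_process M X"
    and "\<forall>s\<ge>0. integrable M (X s) \<and> (\<integral>\<omega>. X s \<omega> \<partial>M) = 0"
    and "\<forall>s\<ge>0. \<forall>t\<ge>0. R s t = covar M (X s) (X t)"
    and "\<forall>c>0. \<forall>s>0. \<forall>t>0. R (c * s) (c * t) = c powr (2 * \<rho>) * R s t"
    and \<alpha>: "0 < \<alpha>"
  shows "delta_corr M X \<alpha> k j = incr_covar R \<alpha> j / ((\<alpha> powr \<rho>) ^ j * \<bar>incr_covar R \<alpha> 0\<bar>)"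
proof -
  define \<Lambda> where "\<Lambda> = \<alpha> powr \<rho>"
  have \<Lambda>: "0 < \<Lambda>"
    using \<alpha> by (simp add: \<Lambda>_def)
  note covar = covar_incr_eq[OF assms, folded \<Lambda>_def]
  have "covar M (incr X \<alpha> k) (incr X \<alpha> k) * covar M (incr X \<alpha> (k + j)) (incr X \<alpha> (k + j))
      = ((\<Lambda> ^ k)\<^sup>2 * \<Lambda> ^ j * incr_covar R \<alpha> 0)\<^sup>2"
    using covar[of k 0] covar[of "k + j" 0] by (simp add: power_add power_mult_distrib power2_eq_square)
  then have "sqrt (covar M (incr X \<alpha> k) (incr X \<alpha> k) * covar M (incr X \<alpha> (k + j)) (incr X \<alpha> (k + j)))
      = (\<Lambda> ^ k)\<^sup>2 * (\<Lambda> ^ j * \<bar>incr_covar R \<alpha> 0\<bar>)"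
    using \<Lambda> by (simp add: abs_mult)
  then show ?thesis
    using \<Lambda> unfolding delta_corr_def correl_def covar by (simp add: \<Lambda>_def)
qed

lemma incr_covar_eq:
  fixes R :: "real \<Rightarrow> real \<Rightarrow> real"
  assumes scaling: "\<forall>c>0. \<forall>s>0. \<forall>t>0. R (c * s) (c * t) = c powr (2 * \<rho>) * R s t"
    and \<alpha>: "0 < \<alpha>" and j: "1 \<le> j"
  defines "\<Lambda> \<equiv> \<alpha> powr \<rho>" and "h \<equiv> \<lambda>x. x powr (- \<rho>) * R 1 x"
  shows "incr_covar R \<alpha> j = \<Lambda> ^ j * (\<Lambda>\<^sup>2 * h (\<alpha> ^ j) - \<Lambda> * h (\<alpha> ^ (j - 1)) - \<Lambda> * h (\<alpha> ^ (j + 1)) + h (\<alpha> ^ j))"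
proof -
  obtain i where i: "j = Suc i"
    using j by (cases j) auto
  have \<Lambda>: "0 < \<Lambda>"
    using \<alpha> by (simp add: \<Lambda>_def)
  have "R \<alpha> (\<alpha> * t) = \<Lambda>\<^sup>2 * R 1 t" if "0 < t" for t
    using scaling[rule_format, of \<alpha> 1 t] \<alpha> that by (simp add: \<Lambda>_def power2_eq_square flip: powr_add)
  then have A: "R \<alpha> (\<alpha> ^ (j + 1)) = \<Lambda>\<^sup>2 * R 1 (\<alpha> ^ j)" and B: "R \<alpha> (\<alpha> ^ j) = \<Lambda>\<^sup>2 * R 1 (\<alpha> ^ (j - 1))"
    using \<alpha> i by simp_all
  have C: "R 1 (\<alpha> ^ m) = \<Lambda> ^ m * h (\<alpha> ^ m)" for m
    using \<alpha> \<Lambda> by (simp add: h_def \<Lambda>_def powr_minus powr_power_eq_power_powr field_simps)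
  have "incr_covar R \<alpha> j = \<Lambda>\<^sup>2 * (\<Lambda> ^ j * h (\<alpha> ^ j)) - \<Lambda>\<^sup>2 * (\<Lambda> ^ (j - 1) * h (\<alpha> ^ (j - 1)))
      - \<Lambda> ^ (j + 1) * h (\<alpha> ^ (j + 1)) + \<Lambda> ^ j * h (\<alpha> ^ j)"
    unfolding incr_covar_def by (simp only: A B C)
  then show ?thesis
    using i by (simp add: algebra_simps power2_eq_square)
qed

lemma eventually_bigo_ln_powr_at_geometric:
  fixes f :: "real \<Rightarrow> real"
  assumes f: "f \<in> O[at_top](\<lambda>x. ln x powr (- \<eta>))" and \<eta>: "0 < \<eta>" and \<alpha>: "1 < \<alpha>"
  shows "\<exists>H. \<forall>\<^sub>F j in sequentially. \<forall>m \<ge> j - 1. \<bar>f (\<alpha> ^ m)\<bar> \<le> H * real j powr (- \<eta>)"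
proof -
  define L where "L = ln \<alpha>"
  have L: "0 < L"
    using \<alpha> by (simp add: L_def)
  from f obtain H where H: "0 < H" "\<forall>\<^sub>F x in at_top. norm (f x) \<le> H * norm (ln x powr (- \<eta>))"
    by (elim landau_o.bigE)
  from H(2) obtain x\<^sub>0 where x\<^sub>0: "\<And>x. x\<^sub>0 \<le> x \<Longrightarrow> \<bar>f x\<bar> \<le> H * ln x powr (- \<eta>)"
    by (auto simp: eventually_at_top_linorder)
  obtain m\<^sub>0 where m\<^sub>0: "x\<^sub>0 < \<alpha> ^ m\<^sub>0"
    using real_arch_pow[OF \<alpha>] by blast
  have "\<forall>m \<ge> j - 1. \<bar>f (\<alpha> ^ m)\<bar> \<le> H * (L / 2) powr (- \<eta>) * real j powr (- \<eta>)"
    if j: "max (m\<^sub>0 + 1) 2 \<le> j" for j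
  proof (intro allI impI)
    fix m
    assume m: "j - 1 \<le> m"
    have "\<alpha> ^ m\<^sub>0 \<le> \<alpha> ^ m"
      using m j \<alpha> by (intro power_increasing) auto
    then have "x\<^sub>0 \<le> \<alpha> ^ m"
      using m\<^sub>0 by linarith
    then have "\<bar>f (\<alpha> ^ m)\<bar> \<le> H * (real m * L) powr (- \<eta>)"
      using x\<^sub>0[of "\<alpha> ^ m"] \<alpha> by (simp add: L_def ln_realpow)
    moreover have "(real m * L) powr (- \<eta>) \<le> (real j / 2 * L) powr (- \<eta>)"
      using m j L \<eta> by (intro powr_mono2' mult_right_mono) auto
    moreover have "(real j / 2 * L) powr (- \<eta>) = (L / 2) powr (- \<eta>) * real j powr (- \<eta>)"
      using L by (simp add: powr_mult[symmetric] mult_ac)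
    ultimately show "\<bar>f (\<alpha> ^ m)\<bar> \<le> H * (L / 2) powr (- \<eta>) * real j powr (- \<eta>)"
      using H(1) by (metis mult.assoc mult_le_cancel_left_pos order_trans)
  qed
  then show ?thesis
    by (auto simp: eventually_sequentially)
qed

lemma abs_second_difference_le:
  fixes \<Lambda> a b c B :: real
  assumes "0 \<le> \<Lambda>" "\<bar>a\<bar> \<le> B" "\<bar>b\<bar> \<le> B" "\<bar>c\<bar> \<le> B"
  shows "\<bar>\<Lambda>\<^sup>2 * a - \<Lambda> * b - \<Lambda> * c + a\<bar> \<le> (\<Lambda> + 1)\<^sup>2 * B"
proof -
  have "\<bar>\<Lambda>\<^sup>2 * a - \<Lambda> * b - \<Lambda> * c + a\<bar> \<le> \<bar>\<Lambda>\<^sup>2 * a\<bar> + \<bar>\<Lambda> * b\<bar> + \<bar>\<Lambda> * c\<bar> + \<bar>a\<bar>"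
    by arith
  also have "\<dots> = \<Lambda>\<^sup>2 * \<bar>a\<bar> + \<Lambda> * \<bar>b\<bar> + \<Lambda> * \<bar>c\<bar> + \<bar>a\<bar>"
    using assms(1) by (simp add: abs_mult)
  also have "\<dots> \<le> \<Lambda>\<^sup>2 * B + \<Lambda> * B + \<Lambda> * B + B"
    using assms by (intro add_mono mult_left_mono) auto
  also have "\<dots> = (\<Lambda> + 1)\<^sup>2 * B"
    by (simp add: power2_eq_square algebra_simps)
  finally show ?thesis .
qed

lemma eventually_abs_delta_corr_le:
  assumes "prob_space M" "gaussian_process M X"
    and "\<forall>s\<ge>0. integrable M (X s) \<and> (\<integral>\<omega>. X s \<omega> \<partial>M) = 0"
    and "\<forall>s\<ge>0. \<forall>t\<ge>0. R s t = covar M (X s) (X t)"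
    and scaling: "\<forall>c>0. \<forall>s>0. \<forall>t>0. R (c * s) (c * t) = c powr (2 * \<rho>) * R s t"
    and \<eta>: "0 < \<eta>" and decay: "(\<lambda>x. x powr (- \<rho>) * R 1 x) \<in> O[at_top](\<lambda>x. ln x powr (- \<eta>))"
    and \<alpha>: "1 < \<alpha>"
  shows "\<exists>D. \<forall>\<^sub>F j in sequentially. \<forall>k. \<bar>delta_corr M X \<alpha> k j\<bar> \<le> D * real j powr (- \<eta>)"
proof -
  define \<Lambda> where "\<Lambda> = \<alpha> powr \<rho>"
  define h where "h = (\<lambda>x. x powr (- \<rho>) * R 1 x)"
  have \<Lambda>: "0 < \<Lambda>"
    using \<alpha> by (simp add: \<Lambda>_def)
  obtain H where H: "\<forall>\<^sub>F j in sequentially. \<forall>m \<ge> j - 1. \<bar>h (\<alpha> ^ m)\<bar> \<le> H * real j powr (- \<eta>)"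
    using eventually_bigo_ln_powr_at_geometric[OF decay \<eta> \<alpha>] by (auto simp: h_def)
  have main: "\<bar>delta_corr M X \<alpha> k j\<bar> \<le> (\<Lambda> + 1)\<^sup>2 * H / \<bar>incr_covar R \<alpha> 0\<bar> * real j powr (- \<eta>)"
    if j: "1 \<le> j" and bound: "\<forall>m \<ge> j - 1. \<bar>h (\<alpha> ^ m)\<bar> \<le> H * real j powr (- \<eta>)" for j k
  proof -
    define B where "B = H * real j powr (- \<eta>)"
    define S where "S = \<Lambda>\<^sup>2 * h (\<alpha> ^ j) - \<Lambda> * h (\<alpha> ^ (j - 1)) - \<Lambda> * h (\<alpha> ^ (j + 1)) + h (\<alpha> ^ j)"
    have "delta_corr M X \<alpha> k j = S / \<bar>incr_covar R \<alpha> 0\<bar>"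
      using delta_corr_eq[OF assms(1-5)] incr_covar_eq[OF scaling _ j] \<alpha> \<Lambda>
      by (simp add: S_def h_def \<Lambda>_def)
    moreover have "\<bar>S\<bar> \<le> (\<Lambda> + 1)\<^sup>2 * B"
      unfolding S_def using bound[rule_format, of j] bound[rule_format, of "j - 1"] bound[rule_format, of "j + 1"] \<Lambda>
      by (intro abs_second_difference_le) (auto simp: B_def)
    ultimately show ?thesis
      by (simp add: B_def divide_right_mono)
  qed
  have "\<forall>\<^sub>F j in sequentially. \<forall>k. \<bar>delta_corr M X \<alpha> k j\<bar>
      \<le> (\<Lambda> + 1)\<^sup>2 * H / \<bar>incr_covar R \<alpha> 0\<bar> * real j powr (- \<eta>)"
    using H eventually_ge_at_top[of "1::nat"] by eventually_elim (use main in auto)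
  then show ?thesis
    by blast
qed

section \<open>Tails at the thresholds a_k\<close>

lemma a_seq_eq_sqrt_ln: "1 < \<alpha> \<Longrightarrow> a_seq \<alpha> k = sqrt (2 * ln ((real k + 1) * ln \<alpha>))"
  by (simp add: a_seq_def ln_mult)

lemma one_le_sqrt_two_ln:
  assumes "2 \<le> p"
  shows "1 \<le> sqrt (2 * ln p)"
proof -
  have "ln 2 \<le> ln p"
    using assms by simp
  then show ?thesis
    using ln2_ge_two_thirds by (simp add: real_le_rsqrt)
qed

lemma cubic_gauss_tail_sqrt_ln_le:
  fixes c q :: real
  assumes c: "1/2 \<le> c" and q: "1 \<le> q"
  shows "cubic_gauss_tail c (sqrt (2 * ln q)) \<le> (4 * ln q + 8) * q powr (- c)"
proof -
  have ln: "0 \<le> ln q"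
    using q by simp
  have inv: "0 \<le> 1 / c" "1 / c \<le> 2"
    using c by (auto simp: divide_le_eq)
  have "2 * ln q / c = (2 * ln q) * (1 / c)"
    by simp
  also have "\<dots> \<le> (2 * ln q) * 2"
    using inv ln by (intro mult_left_mono) auto
  finally have "2 * ln q / c \<le> 4 * ln q"
    by simp
  moreover have "2 / c\<^sup>2 = 2 * (1 / c)\<^sup>2"
    by (simp add: power_divide)
  moreover have "(1 / c)\<^sup>2 \<le> 2\<^sup>2"
    using inv by (intro power_mono) auto
  moreover have "cubic_gauss_tail c (sqrt (2 * ln q)) = (2 * ln q / c + 2 / c\<^sup>2) * q powr (- c)"
    using q ln by (simp add: cubic_gauss_tail_def powr_def)
  ultimately show ?thesis
    using q by (simp add: mult_right_mono)
qed

lemma powr_neg_add_le: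
  fixes x a b r s :: real
  assumes "0 < a" "a \<le> x" "0 < b" "b \<le> x" "0 \<le> r" "0 \<le> s"
  shows "x powr (- (r + s)) \<le> a powr (- r) * b powr (- s)"
proof -
  have "x powr (- (r + s)) = x powr (- r) * x powr (- s)"
    by (simp add: powr_add[symmetric])
  also have "\<dots> \<le> a powr (- r) * b powr (- s)"
    using assms by (intro mult_mono powr_mono2') auto
  finally show ?thesis .
qed

(* The logarithmic factors are absorbed by q^(\<epsilon>/2); of the remaining decay q^(-(1 - 3\<epsilon>/4))
   the part 5\<epsilon>/4 goes to k and 1 - 2\<epsilon> to j. *)
lemma cubic_gauss_tail_sqrt_ln_product_le:
  fixes \<epsilon> c k j p q :: real
  assumes \<epsilon>: "0 < \<epsilon>" "\<epsilon> < 1/2" and c: "1 - \<epsilon>/4 \<le> c"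
    and k: "1 \<le> k" "k \<le> p" "p \<le> q" and j: "1 \<le> j" "j \<le> q"
    and log_le: "(4 * ln q + 8)\<^sup>2 \<le> q powr (\<epsilon> / 2)"
  shows "cubic_gauss_tail c (sqrt (2 * ln p)) * cubic_gauss_tail c (sqrt (2 * ln q))
           \<le> 1 / k powr (1 + \<epsilon>) * (1 / j powr (1 - 2 * \<epsilon>))"
proof -
  define P where "P = 4 * ln q + 8"
  have c2: "1/2 \<le> c"
    using c \<epsilon> by simp
  have P: "4 * ln p + 8 \<le> P" "0 \<le> 4 * ln p + 8"
    using k by (auto simp: P_def)
  have "cubic_gauss_tail c (sqrt (2 * ln p)) \<le> (4 * ln p + 8) * p powr (- c)"
    using k c2 by (intro cubic_gauss_tail_sqrt_ln_le) auto
  also have "\<dots> \<le> P * p powr (- c)"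
    using P by (intro mult_right_mono) auto
  finally have "cubic_gauss_tail c (sqrt (2 * ln p)) * cubic_gauss_tail c (sqrt (2 * ln q))
      \<le> (P * p powr (- c)) * (P * q powr (- c))"
    using cubic_gauss_tail_sqrt_ln_le[OF c2, of q] k c2 P
    by (intro mult_mono) (auto simp: P_def cubic_gauss_tail_nonneg)
  also have "\<dots> = (P\<^sup>2 * q powr (- c)) * p powr (- c)"
    by (simp add: power2_eq_square mult_ac)
  also have "\<dots> \<le> (k powr (- (5/4 * \<epsilon>)) * j powr (- (1 - 2 * \<epsilon>))) * k powr (- (1 - \<epsilon>/4))"
  proof (rule mult_mono)
    have "P\<^sup>2 * q powr (- c) \<le> q powr (\<epsilon> / 2) * q powr (- c)"
      using log_le by (intro mult_right_mono) (auto simp: P_def)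
    also have "\<dots> \<le> q powr (- (5/4 * \<epsilon> + (1 - 2 * \<epsilon>)))"
      using c k by (simp add: powr_add[symmetric] powr_mono)
    also have "\<dots> \<le> k powr (- (5/4 * \<epsilon>)) * j powr (- (1 - 2 * \<epsilon>))"
      using k j \<epsilon> by (intro powr_neg_add_le) auto
    finally show "P\<^sup>2 * q powr (- c) \<le> k powr (- (5/4 * \<epsilon>)) * j powr (- (1 - 2 * \<epsilon>))" .
    have "p powr (- c) \<le> p powr (- (1 - \<epsilon>/4))"
      using c k by (intro powr_mono) auto
    also have "\<dots> \<le> k powr (- (1 - \<epsilon>/4))"
      using k \<epsilon> by (intro powr_mono2') auto
    finally show "p powr (- c) \<le> k powr (- (1 - \<epsilon>/4))" .
  qed auto
  also have "\<dots> = k powr (- (5/4 * \<epsilon>) + - (1 - \<epsilon>/4)) * j powr (- (1 - 2 * \<epsilon>))"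
    by (simp only: powr_add mult_ac)
  also have "k powr (- (5/4 * \<epsilon>) + - (1 - \<epsilon>/4)) = k powr (- (1 + \<epsilon>))"
    by (rule arg_cong[where f = "\<lambda>e. k powr e"]) simp
  finally show ?thesis
    by (simp only: powr_minus_divide)
qed

lemma eventually_abs_phi_fun_a_seq_le:
  assumes \<alpha>: "exp 1 \<le> \<alpha>" and \<epsilon>: "0 < \<epsilon>" "\<epsilon> < 1/2"
  shows "\<forall>\<^sub>F j in sequentially. \<forall>k \<ge> 1. \<forall>\<delta>. \<bar>\<delta>\<bar> \<le> \<epsilon>/4 \<longrightarrow>
           \<bar>phi_fun \<delta> (a_seq \<alpha> k) (a_seq \<alpha> (k + j))\<bar>
             \<le> \<bar>\<delta>\<bar> * (1 / real k powr (1 + \<epsilon>) * (1 / real j powr (1 - 2 * \<epsilon>)))"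
proof -
  define L where "L = ln \<alpha>"
  have \<alpha>1: "1 < \<alpha>"
    using \<alpha> by (meson exp_gt_one less_le_trans zero_less_one)
  have L: "1 \<le> L"
    using \<alpha> \<alpha>1 by (simp add: L_def ln_ge_iff)
  have "\<forall>\<^sub>F x in at_top. (4 * ln x + 8)\<^sup>2 \<le> x powr (\<epsilon> / 2)"
    using \<epsilon> by real_asymp
  then obtain x\<^sub>1 where x\<^sub>1: "\<And>x. x\<^sub>1 \<le> x \<Longrightarrow> (4 * ln x + 8)\<^sup>2 \<le> x powr (\<epsilon> / 2)"
    by (auto simp: eventually_at_top_linorder)
  have bound: "\<forall>k \<ge> 1. \<forall>\<delta>. \<bar>\<delta>\<bar> \<le> \<epsilon>/4 \<longrightarrow> \<bar>phi_fun \<delta> (a_seq \<alpha> k) (a_seq \<alpha> (k + j))\<bar>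
          \<le> \<bar>\<delta>\<bar> * (1 / real k powr (1 + \<epsilon>) * (1 / real j powr (1 - 2 * \<epsilon>)))"
    if j: "max 1 (nat \<lceil>x\<^sub>1\<rceil>) \<le> j" for j
  proof (intro allI impI)
    fix k :: nat and \<delta> :: real
    assume k: "1 \<le> k" and \<delta>: "\<bar>\<delta>\<bar> \<le> \<epsilon>/4"
    define p where "p = (real k + 1) * L"
    define q where "q = (real (k + j) + 1) * L"
    have "real k + 1 \<le> p" "real (k + j) + 1 \<le> q"
      using L by (simp_all add: p_def q_def mult_left_le)
    moreover have "p \<le> q"
      using L by (simp add: p_def q_def mult_right_mono)
    moreover have "x\<^sub>1 \<le> real j"
      using j by linarith
    ultimately have pq: "real k \<le> p" "2 \<le> p" "p \<le> q" "real j \<le> q" "x\<^sub>1 \<le> q"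
      using k by auto
    have "\<bar>phi_fun \<delta> (a_seq \<alpha> k) (a_seq \<alpha> (k + j))\<bar>
        \<le> \<bar>\<delta>\<bar> * (cubic_gauss_tail (1 - \<bar>\<delta>\<bar>) (sqrt (2 * ln p)) * cubic_gauss_tail (1 - \<bar>\<delta>\<bar>) (sqrt (2 * ln q)))"
      using abs_phi_fun_le[of \<delta> "sqrt (2 * ln p)" "sqrt (2 * ln q)"] \<delta> \<epsilon> pq one_le_sqrt_two_ln[of p]
        one_le_sqrt_two_ln[of q]
      by (simp add: a_seq_eq_sqrt_ln[OF \<alpha>1] p_def q_def L_def)
    also have "\<dots> \<le> \<bar>\<delta>\<bar> * (1 / real k powr (1 + \<epsilon>) * (1 / real j powr (1 - 2 * \<epsilon>)))"
      using \<epsilon> \<delta> k j pq x\<^sub>1[of q]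
      by (intro mult_left_mono cubic_gauss_tail_sqrt_ln_product_le) auto
    finally show "\<bar>phi_fun \<delta> (a_seq \<alpha> k) (a_seq \<alpha> (k + j))\<bar>
        \<le> \<bar>\<delta>\<bar> * (1 / real k powr (1 + \<epsilon>) * (1 / real j powr (1 - 2 * \<epsilon>)))" .
  qed
  then show ?thesis
    unfolding eventually_sequentially by blast
qed

lemma eventually_sequentially_ex_pos:
  "(\<forall>\<^sub>F j in sequentially. \<forall>k. Q k \<longrightarrow> P k j) \<Longrightarrow> \<exists>N > 0. \<forall>k j. Q k \<longrightarrow> N \<le> j \<longrightarrow> P k j"
  unfolding eventually_sequentially by (metis Suc_leD zero_less_Suc)

lemma eventually_abs_phi_fun_a_seq_decay:
  fixes \<delta> :: "nat \<Rightarrow> nat \<Rightarrow> real"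
  assumes \<alpha>: "exp 1 \<le> \<alpha>" and \<epsilon>: "0 < \<epsilon>" "\<epsilon> < 1/2" and \<eta>: "0 < \<eta>"
    and \<delta>: "\<forall>\<^sub>F j in sequentially. \<forall>k. \<bar>\<delta> k j\<bar> \<le> D * real j powr (- \<eta>)"
  shows "\<forall>\<^sub>F j in sequentially. \<forall>k \<ge> 1. \<bar>phi_fun (\<delta> k j) (a_seq \<alpha> k) (a_seq \<alpha> (k + j))\<bar>
           \<le> (\<bar>D\<bar> + 1) * (1 / real k powr (1 + \<epsilon>)) * (1 / real j powr (1 + \<eta> - 2 * \<epsilon>))"
proof -
  have "(\<lambda>j. D * real j powr (- \<eta>)) \<longlonglongrightarrow> D * 0"
    using \<eta> by (intro tendsto_mult tendsto_const tendsto_neg_powr filterlim_real_sequentially) auto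
  then have small: "\<forall>\<^sub>F j in sequentially. D * real j powr (- \<eta>) < \<epsilon>/4"
    using \<epsilon> by (intro order_tendstoD) auto
  from \<delta> small eventually_abs_phi_fun_a_seq_le[OF \<alpha> \<epsilon>] eventually_ge_at_top[of "1::nat"]
  show ?thesis
  proof eventually_elim
    case (elim j)
    show ?case
    proof (intro allI impI)
      fix k :: nat
      assume k: "1 \<le> k"
      have "\<bar>\<delta> k j\<bar> \<le> \<epsilon>/4"
        using elim(1,2) by (meson less_imp_le order_trans)
      then have "\<bar>phi_fun (\<delta> k j) (a_seq \<alpha> k) (a_seq \<alpha> (k + j))\<bar>
          \<le> \<bar>\<delta> k j\<bar> * (1 / real k powr (1 + \<epsilon>) * (1 / real j powr (1 - 2 * \<epsilon>)))"
        using elim(3) k by blast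
      also have "\<dots> \<le> ((\<bar>D\<bar> + 1) * real j powr (- \<eta>)) * (1 / real k powr (1 + \<epsilon>) * (1 / real j powr (1 - 2 * \<epsilon>)))"
        using elim(1) order_trans[OF _ mult_right_mono[of D "\<bar>D\<bar> + 1" "real j powr (- \<eta>)"]]
        by (intro mult_right_mono) auto
      also have "real j powr (- \<eta>) * (1 / real j powr (1 - 2 * \<epsilon>)) = 1 / real j powr (1 + \<eta> - 2 * \<epsilon>)"
      proof -
        have exponent: "1 + \<eta> - 2 * \<epsilon> = \<eta> + (1 - 2 * \<epsilon>)"
          by simp
        show ?thesis
          unfolding exponent by (simp add: powr_minus_divide powr_add)
      qed
      then have "((\<bar>D\<bar> + 1) * real j powr (- \<eta>)) * (1 / real k powr (1 + \<epsilon>) * (1 / real j powr (1 - 2 * \<epsilon>)))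
          = (\<bar>D\<bar> + 1) * (1 / real k powr (1 + \<epsilon>)) * (1 / real j powr (1 + \<eta> - 2 * \<epsilon>))"
        by (metis mult.assoc mult.left_commute)
      finally show "\<bar>phi_fun (\<delta> k j) (a_seq \<alpha> k) (a_seq \<alpha> (k + j))\<bar>
          \<le> (\<bar>D\<bar> + 1) * (1 / real k powr (1 + \<epsilon>)) * (1 / real j powr (1 + \<eta> - 2 * \<epsilon>))" .
    qed
  qed
qed

theorem lemma4p6:
  fixes M :: "'a measure" and X :: "real \<Rightarrow> 'a \<Rightarrow> real"
    and R :: "real \<Rightarrow> real \<Rightarrow> real" and \<rho> \<eta> :: real
  assumes "prob_space M"
    and "gaussian_process M X"
    and "\<forall>s\<ge>0. integrable M (X s) \<and> (\<integral>\<omega>. X s \<omega> \<partial>M) = 0"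
    and "\<forall>\<omega>\<in>space M. continuous_on {0..} (\<lambda>s. X s \<omega>)"
    and "\<forall>s\<ge>0. \<forall>t\<ge>0. R s t = covar M (X s) (X t)"
    and "\<rho> > 0"
    and "\<forall>c>0. \<forall>s>0. \<forall>t>0. R (c * s) (c * t) = c powr (2 * \<rho>) * R s t"
    and "\<eta> > 0"
    and "(\<lambda>x. x powr (-\<rho>) * R 1 x) \<in> O[at_top](\<lambda>x. ln x powr (-\<eta>))"
  shows "\<exists>\<alpha>\<^sub>0. \<forall>\<alpha>\<ge>\<alpha>\<^sub>0. \<alpha> > 1 \<longrightarrow> (\<exists>C>0. \<forall>\<epsilon>. 0 < \<epsilon> \<and> \<epsilon> < min \<eta> 1 / 2 \<longrightarrow>
           (\<exists>Mb::nat. Mb > 0 \<and> (\<forall>k j. k \<ge> 1 \<longrightarrow> j \<ge> Mb \<longrightarrow>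
              \<bar>phi_fun (delta_corr M X \<alpha> k j) (a_seq \<alpha> k) (a_seq \<alpha> (k + j))\<bar>
                \<le> C * (1 / real k powr (1 + \<epsilon>)) * (1 / real j powr (1 + \<eta> - 2 * \<epsilon>)))))"
proof -
  have "\<exists>C>0. \<forall>\<epsilon>. 0 < \<epsilon> \<and> \<epsilon> < min \<eta> 1 / 2 \<longrightarrow>
           (\<exists>Mb::nat. Mb > 0 \<and> (\<forall>k j. k \<ge> 1 \<longrightarrow> j \<ge> Mb \<longrightarrow>
              \<bar>phi_fun (delta_corr M X \<alpha> k j) (a_seq \<alpha> k) (a_seq \<alpha> (k + j))\<bar>
                \<le> C * (1 / real k powr (1 + \<epsilon>)) * (1 / real j powr (1 + \<eta> - 2 * \<epsilon>))))"
    if \<alpha>: "exp 1 \<le> \<alpha>" "1 < \<alpha>" for \<alpha>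
  proof -
    obtain D where D: "\<forall>\<^sub>F j in sequentially. \<forall>k. \<bar>delta_corr M X \<alpha> k j\<bar> \<le> D * real j powr (- \<eta>)"
      using eventually_abs_delta_corr_le[OF assms(1-3,5,7-9) \<alpha>(2)] by blast
    have "\<epsilon> < 1/2" if "\<epsilon> < min \<eta> 1 / 2" for \<epsilon> :: real
      using that by simp
    then show ?thesis
      using eventually_sequentially_ex_pos[OF eventually_abs_phi_fun_a_seq_decay[OF \<alpha>(1) _ _ assms(8) D]]
      by (intro exI[of _ "\<bar>D\<bar> + 1"] conjI) (simp, blast)
  qed
  then show ?thesis
    by blast
qed

end
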